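(* Let $H$, $G$, $R$ be finite simple connected graphs such that $H$ is an induced subgraph of $G$ and $G$ is an induced subgraph of $R$, with $\mathrm{diam}(H)=\mathrm{diam}(G)=2$. If $\beta(R)=n(R)-t$ and $\beta(H)=n(H)-t$ for some positive integer $t$, then $\beta(G)=n(G)-t$.
   Context: $n(X)$ denotes the number of vertices of a graph $X$. For an ordered set $W=\{w_1,\dots,w_k\}$ of vertices of a connected graph $X$, $r(v|W)=(d_X(v,w_1),\dots,d_X(v,w_k))$ with $d_X$ the shortest-path distance; $W$ is a resolving set if distinct vertices have distinct vectors $r(\cdot|W)$, and $\beta(X)$, the metric dimension, is the minimum size of a resolving set. *)

theory Defs
  imports Main
begin

definition simple_graph :: "'a set \<Rightarrow> ('a \<Rightarrow> 'a \<Rightarrow> bool) \<Rightarrow> bool" where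
  "simple_graph V E \<longleftrightarrow> finite V \<and> (\<forall>u v. E u v \<longrightarrow> E v u) \<and> (\<forall>v. \<not> E v v)
     \<and> (\<forall>u v. E u v \<longrightarrow> u \<in> V \<and> v \<in> V)"

definition induced_subgraph :: "'a set \<Rightarrow> ('a \<Rightarrow> 'a \<Rightarrow> bool) \<Rightarrow> 'a set \<Rightarrow> ('a \<Rightarrow> 'a \<Rightarrow> bool) \<Rightarrow> bool" where
  "induced_subgraph V' E' V E \<longleftrightarrow> V' \<subseteq> V \<and> (\<forall>u v. E' u v \<longleftrightarrow> (u \<in> V' \<and> v \<in> V' \<and> E u v))"

definition walk :: "'a set \<Rightarrow> ('a \<Rightarrow> 'a \<Rightarrow> bool) \<Rightarrow> 'a list \<Rightarrow> bool" where
  "walk V E xs \<longleftrightarrow> xs \<noteq> [] \<and> set xs \<subseteq> V \<and> (\<forall>i. Suc i < length xs \<longrightarrow> E (xs ! i) (xs ! Suc i))"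

definition reachable_in :: "'a set \<Rightarrow> ('a \<Rightarrow> 'a \<Rightarrow> bool) \<Rightarrow> nat \<Rightarrow> 'a \<Rightarrow> 'a \<Rightarrow> bool" where
  "reachable_in V E n u v \<longleftrightarrow> (\<exists>xs. walk V E xs \<and> hd xs = u \<and> last xs = v \<and> length xs = Suc n)"

definition connected_graph :: "'a set \<Rightarrow> ('a \<Rightarrow> 'a \<Rightarrow> bool) \<Rightarrow> bool" where
  "connected_graph V E \<longleftrightarrow> V \<noteq> {} \<and> (\<forall>u\<in>V. \<forall>v\<in>V. \<exists>n. reachable_in V E n u v)"

definition gdist :: "'a set \<Rightarrow> ('a \<Rightarrow> 'a \<Rightarrow> bool) \<Rightarrow> 'a \<Rightarrow> 'a \<Rightarrow> nat" where
  "gdist V E u v = (LEAST n. reachable_in V E n u v)"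

definition diameter :: "'a set \<Rightarrow> ('a \<Rightarrow> 'a \<Rightarrow> bool) \<Rightarrow> nat" where
  "diameter V E = Max {gdist V E u v | u v. u \<in> V \<and> v \<in> V}"

definition resolving_set :: "'a set \<Rightarrow> ('a \<Rightarrow> 'a \<Rightarrow> bool) \<Rightarrow> 'a set \<Rightarrow> bool" where
  "resolving_set V E W \<longleftrightarrow> W \<subseteq> V \<and>
     (\<forall>u\<in>V. \<forall>v\<in>V. (\<forall>w\<in>W. gdist V E u w = gdist V E v w) \<longrightarrow> u = v)"

definition metric_dim :: "'a set \<Rightarrow> ('a \<Rightarrow> 'a \<Rightarrow> bool) \<Rightarrow> nat" where
  "metric_dim V E = (LEAST k. \<exists>W. resolving_set V E W \<and> card W = k)"

end

theory Submission
  imports Defs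
begin

text \<open>If an induced subgraph H of a connected graph G has diameter at most 2, then H is
  isometric in G: distances 0 and 1 are read off from equality and adjacency, which G and H
  share, and every other distance is 2 in both. Hence a resolving set of H together with all
  vertices outside H resolves G, so \<open>\<beta>(G) \<le> \<beta>(H) + n(G) - n(H)\<close>. Applied to \<open>H \<subseteq> G\<close> and to
  \<open>G \<subseteq> R\<close>, this squeezes \<open>\<beta>(G)\<close> between \<open>\<beta>(R) - n(R) + n(G)\<close> and \<open>\<beta>(H) - n(H) + n(G)\<close>,
  both equal to \<open>n(G) - t\<close>.\<close>

lemma reachable_in_0_iff: "reachable_in V E 0 u v \<longleftrightarrow> u \<in> V \<and> u = v"
proof
  assume "reachable_in V E 0 u v"
  then obtain x where "walk V E [x]" "hd [x] = u" "last [x] = v"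
    unfolding reachable_in_def by (auto simp: length_Suc_conv)
  then show "u \<in> V \<and> u = v" unfolding walk_def by auto
next
  assume "u \<in> V \<and> u = v"
  then show "reachable_in V E 0 u v"
    unfolding reachable_in_def walk_def by (intro exI[of _ "[u]"]) auto
qed

lemma reachable_in_1_iff: "reachable_in V E 1 u v \<longleftrightarrow> E u v \<and> u \<in> V \<and> v \<in> V"
proof
  assume "reachable_in V E 1 u v"
  then obtain x y where "walk V E [x, y]" "hd [x, y] = u" "last [x, y] = v"
    unfolding reachable_in_def by (auto simp: length_Suc_conv)
  then show "E u v \<and> u \<in> V \<and> v \<in> V" unfolding walk_def by force
next
  assume "E u v \<and> u \<in> V \<and> v \<in> V"
  then show "reachable_in V E 1 u v"
    unfolding reachable_in_def walk_def by (intro exI[of _ "[u, v]"]) (auto simp: less_Suc_eq)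
qed

lemma reachable_in_induced_subgraph:
  assumes "induced_subgraph V' E' V E" "reachable_in V' E' n u v"
  shows "reachable_in V E n u v"
  using assms unfolding induced_subgraph_def reachable_in_def walk_def by blast

lemma reachable_in_gdist:
  assumes "connected_graph V E" "u \<in> V" "v \<in> V"
  shows "reachable_in V E (gdist V E u v) u v"
  using assms unfolding connected_graph_def gdist_def by (meson LeastI_ex)

lemma gdist_le_reachable_in: "reachable_in V E n u v \<Longrightarrow> gdist V E u v \<le> n"
  unfolding gdist_def by (rule Least_le)

lemma gdist_eq_0_iff:
  assumes "connected_graph V E" "u \<in> V" "v \<in> V"
  shows "gdist V E u v = 0 \<longleftrightarrow> u = v"
  using reachable_in_gdist[OF assms] gdist_le_reachable_in[of V E 0 u v] assms(2)
  by (auto simp: reachable_in_0_iff)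

lemma gdist_eq_1_imp_adjacent:
  assumes "connected_graph V E" "u \<in> V" "v \<in> V" "gdist V E u v = 1"
  shows "E u v"
  using reachable_in_gdist[OF assms(1-3)] assms(4) reachable_in_1_iff[of V E u v] by simp

lemma gdist_le_diameter:
  assumes "simple_graph V E" "u \<in> V" "v \<in> V"
  shows "gdist V E u v \<le> diameter V E"
proof -
  have "{gdist V E u v | u v. u \<in> V \<and> v \<in> V} = (\<lambda>(u, v). gdist V E u v) ` (V \<times> V)"
    by auto
  moreover have "finite V" using assms(1) unfolding simple_graph_def by simp
  ultimately show ?thesis
    unfolding diameter_def using assms(2,3) by (intro Max_ge) auto
qed

lemma gdist_induced_subgraph_diameter_le_2:
  assumes sub: "induced_subgraph V' E' V E"
    and "connected_graph V E" and conn': "connected_graph V' E'"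
    and simple': "simple_graph V' E'" and diam: "diameter V' E' \<le> 2"
    and u: "u \<in> V'" and v: "v \<in> V'"
  shows "gdist V E u v = gdist V' E' u v"
proof -
  have "u \<in> V" "v \<in> V" using sub u v unfolding induced_subgraph_def by auto
  note conn = \<open>connected_graph V E\<close> this
  have "gdist V E u v \<le> gdist V' E' u v"
    by (intro gdist_le_reachable_in reachable_in_induced_subgraph[OF sub]
        reachable_in_gdist[OF conn' u v])
  moreover have "gdist V' E' u v \<le> gdist V E u v"
  proof (cases "gdist V E u v")
    case 0
    then have "u = v" using gdist_eq_0_iff[OF conn] by simp
    then show ?thesis using gdist_eq_0_iff[OF conn' u v] by simp
  next
    case (Suc n)
    show ?thesis
    proof (cases n)
      case 0
      then have "E u v" using gdist_eq_1_imp_adjacent[OF conn] Suc by simp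
      then have "E' u v" using sub u v unfolding induced_subgraph_def by auto
      then have "gdist V' E' u v \<le> 1"
        using u v reachable_in_1_iff[of V' E' u v] gdist_le_reachable_in[of V' E' 1 u v] by blast
      then show ?thesis using Suc 0 by simp
    next
      case (Suc m)
      then show ?thesis
        using \<open>gdist V E u v = Suc n\<close> gdist_le_diameter[OF simple' u v] diam by simp
    qed
  qed
  ultimately show ?thesis by simp
qed

lemma resolving_set_vertices:
  assumes "connected_graph V E"
  shows "resolving_set V E V"
  unfolding resolving_set_def
  using gdist_eq_0_iff[OF assms] by (metis order_refl)

lemma metric_dim_le_card:
  "resolving_set V E W \<Longrightarrow> metric_dim V E \<le> card W"
  unfolding metric_dim_def by (rule Least_le) blast

lemma ex_resolving_set_card_metric_dim:
  assumes "connected_graph V E"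
  obtains W where "resolving_set V E W" "card W = metric_dim V E"
  unfolding metric_dim_def
  using LeastI_ex[of "\<lambda>k. \<exists>W. resolving_set V E W \<and> card W = k"]
    resolving_set_vertices[OF assms] by blast

lemma resolving_set_Un_outside:
  assumes sub: "induced_subgraph V' E' V E" and conn: "connected_graph V E"
    and res': "resolving_set V' E' W'"
    and isometric: "\<And>u v. u \<in> V' \<Longrightarrow> v \<in> V' \<Longrightarrow> gdist V E u v = gdist V' E' u v"
  shows "resolving_set V E (W' \<union> (V - V'))"
  unfolding resolving_set_def
proof (intro conjI ballI impI)
  have "W' \<subseteq> V'" "V' \<subseteq> V" using res' sub unfolding resolving_set_def induced_subgraph_def by auto
  then show "W' \<union> (V - V') \<subseteq> V" by blast
  fix u v assume uv: "u \<in> V" "v \<in> V"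
    and same: "\<forall>w\<in>W' \<union> (V - V'). gdist V E u w = gdist V E v w"
  show "u = v"
  proof (cases "u \<in> V' \<and> v \<in> V'")
    case True
    then have "\<forall>w\<in>W'. gdist V' E' u w = gdist V' E' v w"
      using same isometric \<open>W' \<subseteq> V'\<close> by (metis UnI1 subsetD)
    then show ?thesis using res' True unfolding resolving_set_def by blast
  next
    case False
    then have "u \<in> V - V' \<or> v \<in> V - V'" using uv by blast
    then show ?thesis using same gdist_eq_0_iff[OF conn] uv by (metis UnI2)
  qed
qed

lemma metric_dim_le_induced_subgraph:
  assumes sub: "induced_subgraph V' E' V E"
    and conn: "connected_graph V E" and conn': "connected_graph V' E'"
    and simple': "simple_graph V' E'" and diam: "diameter V' E' \<le> 2"
  shows "metric_dim V E \<le> metric_dim V' E' + card (V - V')"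
proof -
  obtain W' where W': "resolving_set V' E' W'" "card W' = metric_dim V' E'"
    using ex_resolving_set_card_metric_dim[OF conn'] .
  have "resolving_set V E (W' \<union> (V - V'))"
    using resolving_set_Un_outside[OF sub conn W'(1)]
      gdist_induced_subgraph_diameter_le_2[OF sub conn conn' simple' diam] by blast
  then have "metric_dim V E \<le> card (W' \<union> (V - V'))" by (rule metric_dim_le_card)
  also have "\<dots> \<le> card W' + card (V - V')" by (rule card_Un_le)
  finally show ?thesis using W'(2) by simp
qed

theorem corollary2p7:
  fixes VH VG VR :: "'a set" and EH EG ER :: "'a \<Rightarrow> 'a \<Rightarrow> bool" and t :: nat
  assumes "simple_graph VH EH" and "simple_graph VG EG" and "simple_graph VR ER"
    and "connected_graph VH EH" and "connected_graph VG EG" and "connected_graph VR ER"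
    and "induced_subgraph VH EH VG EG" and "induced_subgraph VG EG VR ER"
    and "diameter VH EH = 2" and "diameter VG EG = 2"
    and "t > 0"
    and "int (metric_dim VR ER) = int (card VR) - int t"
    and "int (metric_dim VH EH) = int (card VH) - int t"
  shows "int (metric_dim VG EG) = int (card VG) - int t"
proof -
  have upper: "metric_dim VG EG \<le> metric_dim VH EH + card (VG - VH)"
    using metric_dim_le_induced_subgraph[OF assms(7,5,4,1)] assms(9) by simp
  have lower: "metric_dim VR ER \<le> metric_dim VG EG + card (VR - VG)"
    using metric_dim_le_induced_subgraph[OF assms(8,6,5,2)] assms(10) by simp
  have "VH \<subseteq> VG" "VG \<subseteq> VR" using assms(7,8) unfolding induced_subgraph_def by auto
  moreover have "finite VR" using assms(3) unfolding simple_graph_def by simp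
  ultimately have "card (VG - VH) = card VG - card VH" "card (VR - VG) = card VR - card VG"
    "card VH \<le> card VG" "card VG \<le> card VR"
    by (meson card_Diff_subset card_mono finite_subset)+
  then show ?thesis using upper lower assms(12,13) by linarith
qed

end
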